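(* Let $m\ge3$ be odd and $n\ge2$. Suppose $\mathcal{A}=\sum_{l=1}^r(\mathbf{u}^{(l)})^m$ is a strongly completely positive tensor in which every vector $\mathbf{u}^{(1)},\dots,\mathbf{u}^{(r)}\in\mathbb{R}^n$ is positive (all components $>0$). Then $\mathcal{A}$ is strongly positive definite.
   Context: For $\mathbf{u}\in\mathbb{R}^n$, $\mathbf{u}^m$ is the tensor with entries $u_{i_1}\cdots u_{i_m}$. A tensor $\mathcal{A}=\sum_{l=1}^r(\mathbf{u}^{(l)})^m$ with nonnegative $\mathbf{u}^{(l)}$ is completely positive; it is strongly completely positive if moreover $r\ge n$ and $\{\mathbf{u}^{(1)},\dots,\mathbf{u}^{(r)}\}$ spans $\mathbb{R}^n$. For $\mathbf{x}\in\mathbb{R}^n$, $\mathcal{A}\mathbf{x}^{m-1}$ is the vector with $i$th component $\sum_{i_2,\dots,i_m}a_{ii_2\dots i_m}x_{i_2}\cdots x_{i_m}$. For odd $m$ and symmetric $\mathcal{A}$, $\mathcal{A}$ is strongly positive definite if $\mathcal{A}\mathbf{x}^{m-1}>\mathbf{0}$ componentwise for all nonzero $\mathbf{x}\in\mathbb{R}^n$. *)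

theory Defs
  imports "HOL-Analysis.Analysis" "HOL-Library.Multiset"
begin

text \<open>A real tensor of order m on R^n is modelled as a function on index lists
  over the finite index type 'n; only lists of length m are relevant.\<close>

type_synonym 'n tensor = "'n list \<Rightarrow> real"

definition tensor_power :: "real ^ 'n \<Rightarrow> 'n tensor" where
  "tensor_power u = (\<lambda>is. prod_list (map (\<lambda>i. u $ i) is))"

definition sym_tensor :: "nat \<Rightarrow> 'n tensor \<Rightarrow> bool" where
  "sym_tensor m A \<longleftrightarrow> (\<forall>is js. length is = m \<and> mset js = mset is \<longrightarrow> A js = A is)"

definition tensor_apply :: "nat \<Rightarrow> 'n::finite tensor \<Rightarrow> real ^ 'n \<Rightarrow> real ^ 'n" where
  "tensor_apply m A x = (\<chi> i. \<Sum>is\<in>{is. length is = m - 1}. A (i # is) * prod_list (map (\<lambda>j. x $ j) is))"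

definition strongly_completely_positive_decomp ::
    "nat \<Rightarrow> 'n::finite tensor \<Rightarrow> nat \<Rightarrow> (nat \<Rightarrow> real ^ 'n) \<Rightarrow> bool" where
  "strongly_completely_positive_decomp m A r U \<longleftrightarrow>
     (\<forall>is. length is = m \<longrightarrow> A is = (\<Sum>l<r. tensor_power (U l) is)) \<and>
     (\<forall>l<r. \<forall>i. U l $ i \<ge> 0) \<and>
     r \<ge> CARD('n) \<and> span (U ` {..<r}) = UNIV"

definition strongly_positive_definite :: "nat \<Rightarrow> 'n::finite tensor \<Rightarrow> bool" where
  "strongly_positive_definite m A \<longleftrightarrow> odd m \<and> sym_tensor m A \<and>
     (\<forall>x. x \<noteq> 0 \<longrightarrow> (\<forall>i. tensor_apply m A x $ i > 0))"

end

theory Submission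
  imports Defs
begin

text \<open>Contracting \<open>u\<^sup>m\<close> with \<open>m - 1\<close> copies of \<open>x\<close> gives \<open>(u \<bullet> x) ^ (m - 1) *\<^sub>R u\<close>,
  so \<open>A x\<^sup>m\<^sup>-\<^sup>1\<close> is the sum of the vectors \<open>(u\<^sub>l \<bullet> x) ^ (m - 1) *\<^sub>R u\<^sub>l\<close>. As \<open>m - 1\<close> is even,
  each summand is componentwise nonnegative. Since the \<open>u\<^sub>l\<close> span \<open>\<real>\<^sup>n\<close>, a nonzero \<open>x\<close> is not
  orthogonal to all of them, and the summand of such a \<open>u\<^sub>l\<close> is strictly positive because
  \<open>u\<^sub>l\<close> is.\<close>

lemma lists_length_Suc_eq_image_Cons:
  "{xs. length xs = Suc k} = (\<lambda>(x, xs). x # xs) ` (UNIV \<times> {xs. length xs = k})"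
  by (auto simp: length_Suc_conv image_iff)

lemma sum_prod_list_lists_length_eq:
  fixes f :: "'a::finite \<Rightarrow> 'b::comm_semiring_1"
  shows "(\<Sum>xs\<in>{xs. length xs = k}. prod_list (map f xs)) = (\<Sum>x\<in>UNIV. f x) ^ k"
proof (induction k)
  case 0
  have "{xs :: 'a list. length xs = 0} = {[]}" by auto
  then show ?case by simp
next
  case (Suc k)
  have inj: "inj_on (\<lambda>(x, xs). x # xs) (UNIV \<times> {xs :: 'a list. length xs = k})"
    by (auto simp: inj_on_def)
  have "(\<Sum>xs\<in>{xs. length xs = Suc k}. prod_list (map f xs))
      = (\<Sum>x\<in>UNIV. \<Sum>xs\<in>{xs. length xs = k}. f x * prod_list (map f xs))"
    unfolding lists_length_Suc_eq_image_Cons sum.reindex[OF inj]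
    by (simp add: sum.cartesian_product split_def)
  also have "\<dots> = (\<Sum>x\<in>UNIV. f x) ^ Suc k"
    by (simp add: sum_distrib_left[symmetric] sum_distrib_right[symmetric] Suc.IH)
  finally show ?case .
qed

lemma prod_list_map_times:
  fixes f g :: "'a \<Rightarrow> 'b::comm_monoid_mult"
  shows "prod_list (map (\<lambda>x. f x * g x) xs) = prod_list (map f xs) * prod_list (map g xs)"
  by (induction xs) (simp_all add: ac_simps)

lemma tensor_power_mset_eq:
  assumes "mset js = mset is"
  shows "tensor_power u js = tensor_power u is"
  unfolding tensor_power_def using assms by (metis mset_map prod_mset_prod_list)

lemma sym_tensor_sum_tensor_power:
  fixes A :: "'n::finite tensor" and U :: "nat \<Rightarrow> real ^ 'n"
  assumes "\<And>is. length is = m \<Longrightarrow> A is = (\<Sum>l<r. tensor_power (U l) is)"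
  shows "sym_tensor m A"
  unfolding sym_tensor_def
proof (intro allI impI)
  fix "is" js :: "'n list"
  assume "length is = m \<and> mset js = mset is"
  moreover from this have "length js = m" by (metis size_mset)
  ultimately show "A js = A is" using assms tensor_power_mset_eq[of js "is"] by presburger
qed

lemma tensor_power_contraction_nth:
  "(\<Sum>is\<in>{is. length is = k}. tensor_power u (i # is) * prod_list (map (\<lambda>j. x $ j) is))
     = u $ i * (u \<bullet> x) ^ k"
proof -
  have "(\<Sum>is\<in>{is. length is = k}. tensor_power u (i # is) * prod_list (map (\<lambda>j. x $ j) is))
      = u $ i * (\<Sum>is\<in>{is. length is = k}. prod_list (map (\<lambda>j. u $ j * x $ j) is))"
    by (simp add: tensor_power_def prod_list_map_times mult.assoc sum_distrib_left)
  then show ?thesis by (simp add: sum_prod_list_lists_length_eq inner_vec_def)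
qed

lemma tensor_apply_sum_tensor_power:
  assumes "m \<ge> 1"
    and "\<And>is. length is = m \<Longrightarrow> A is = (\<Sum>l<r. tensor_power (U l) is)"
  shows "tensor_apply m A x $ i = (\<Sum>l<r. U l $ i * (U l \<bullet> x) ^ (m - 1))"
proof -
  have "tensor_apply m A x $ i = (\<Sum>is\<in>{is. length is = m - 1}.
      \<Sum>l<r. tensor_power (U l) (i # is) * prod_list (map (\<lambda>j. x $ j) is))"
    unfolding tensor_apply_def using assms by (simp add: sum_distrib_right)
  then show ?thesis
    by (simp add: sum.swap[of _ "{..<r}"] tensor_power_contraction_nth)
qed

lemma spanning_family_not_all_orthogonal:
  assumes "span (U ` S) = UNIV" and "x \<noteq> 0"
  obtains l where "l \<in> S" and "U l \<bullet> x \<noteq> 0"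
proof -
  have "\<not> orthogonal x x" using assms(2) by (simp add: orthogonal_def)
  then have "\<not> (\<forall>y \<in> U ` S. orthogonal x y)" using orthogonal_to_span assms(1) by blast
  then show ?thesis using that by (auto simp: orthogonal_def inner_commute)
qed

lemma sum_positive_times_even_power_pos:
  fixes c :: "nat \<Rightarrow> real"
  assumes "even k" and "\<forall>l<r. a l > 0" and "l < r" and "c l \<noteq> 0"
  shows "(\<Sum>l<r. a l * c l ^ k) > 0"
proof (rule sum_pos2[of "{..<r}" l])
  show "0 < a l * c l ^ k" using assms by (simp add: zero_less_power_eq)
  show "\<And>j. j \<in> {..<r} \<Longrightarrow> 0 \<le> a j * c j ^ k"
    using assms(1,2) by (simp add: less_imp_le zero_le_even_power)
qed (use assms(3) in auto)

theorem corollary3p5: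
  fixes A :: "'n::finite tensor" and U :: "nat \<Rightarrow> real ^ 'n" and m r :: nat
  assumes "odd m" and "m \<ge> 3" and "CARD('n) \<ge> 2"
    and "strongly_completely_positive_decomp m A r U"
    and "\<forall>l<r. \<forall>i. U l $ i > 0"
  shows "strongly_positive_definite m A"
proof -
  from assms(4) have decomp: "\<And>is. length is = m \<Longrightarrow> A is = (\<Sum>l<r. tensor_power (U l) is)"
    and span: "span (U ` {..<r}) = UNIV"
    unfolding strongly_completely_positive_decomp_def by auto
  have "tensor_apply m A x $ i > 0" if "x \<noteq> 0" for x i
  proof -
    obtain l where "l < r" and "U l \<bullet> x \<noteq> 0"
      using spanning_family_not_all_orthogonal[OF span \<open>x \<noteq> 0\<close>] by blast
    moreover have "even (m - 1)" using assms(1,2) by simp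
    ultimately show ?thesis
      using assms(2,5) sum_positive_times_even_power_pos
      by (simp add: tensor_apply_sum_tensor_power[OF _ decomp])
  qed
  then show ?thesis
    unfolding strongly_positive_definite_def
    using assms(1) sym_tensor_sum_tensor_power[OF decomp] by blast
qed

end
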